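(* Let $\mathbf{a}=(a_0,a_1,\dots,a_n)$ be positive integers with $\sum_k \frac{1}{a_k}\ge 1$. Then the function $f_{\mathbf{a}}:\mathbb{R}_+\to\mathbb{Z}$, $$f_{\mathbf{a}}(x)=\sum_{k=0}^n\left(\left\lfloor \frac{x}{a_k}\right\rfloor+\left\lceil\frac{x}{a_k}\right\rceil\right)-\left(\lfloor x\rfloor+\lceil x\rceil\right),$$ attains a minimum, denoted $m(\mathbf{a})$. In particular, if $\mathbf{a}=(2,2,2,a_1,\dots,a_n)$ with $a_k$ positive integers and $n\ge 2$, then $m(\mathbf{a})\ge 2$. *)

theory Defs
  imports Complex_Main
begin

definition f_a :: "nat list \<Rightarrow> real \<Rightarrow> int" where
  "f_a a x = (\<Sum>k\<leftarrow>a. \<lfloor>x / real k\<rfloor> + \<lceil>x / real k\<rceil>) - (\<lfloor>x\<rfloor> + \<lceil>x\<rceil>)"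

definition m_a :: "nat list \<Rightarrow> int" where
  "m_a a = (LEAST v. v \<in> f_a a ` {0<..})"

end

theory Submission
  imports Defs
begin

text \<open>
  Since \<open>\<lfloor>t\<rfloor> + \<lceil>t\<rceil>\<close> lies within 1 of \<open>2 t\<close>, for \<open>x \<ge> 0\<close> we get
  \<open>f_a a x \<ge> 2 x (\<Sum>\<^sub>k 1/a\<^sub>k - 1) - |a| - 1 \<ge> - |a| - 1\<close>, so \<open>f_a a\<close> is an
  integer-valued function bounded below and attains its minimum.
  For \<open>a = (2,2,2,b\<^sub>1,\<dots>,b\<^sub>n)\<close> and \<open>x > 0\<close> each term coming from some \<open>b\<^sub>k\<close> is at
  least 1, and the three terms coming from the 2s dominate the subtracted one, since
  \<open>\<lfloor>x\<rfloor> + \<lceil>x\<rceil> \<le> 3 (\<lfloor>x/2\<rfloor> + \<lceil>x/2\<rceil>)\<close> for \<open>x \<ge> 0\<close>; hence \<open>f_a a x \<ge> n \<ge> 2\<close>.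
\<close>

lemma Inf_int_mem:
  fixes S :: "int set"
  assumes "S \<noteq> {}" and "bdd_below S"
  shows "Inf S \<in> S"
proof -
  obtain x where "x \<in> S" and "x < Inf S + 1"
    using cInf_less_iff[OF assms, of "Inf S + 1"] by auto
  moreover have "Inf S \<le> x"
    using \<open>x \<in> S\<close> assms(2) by (rule cInf_lower)
  ultimately have "x = Inf S" by linarith
  with \<open>x \<in> S\<close> show ?thesis by simp
qed

definition floor_add_ceiling :: "real \<Rightarrow> int" where
  "floor_add_ceiling t = \<lfloor>t\<rfloor> + \<lceil>t\<rceil>"

lemma f_a_eq: "f_a a x = (\<Sum>k\<leftarrow>a. floor_add_ceiling (x / real k)) - floor_add_ceiling x"
  by (simp add: f_a_def floor_add_ceiling_def)

lemma floor_add_ceiling_ge: "2 * t - 1 \<le> real_of_int (floor_add_ceiling t)"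
  unfolding floor_add_ceiling_def using floor_correct[of t] ceiling_correct[of t] by linarith

lemma floor_add_ceiling_le: "real_of_int (floor_add_ceiling t) \<le> 2 * t + 1"
  unfolding floor_add_ceiling_def using floor_correct[of t] ceiling_correct[of t] by linarith

lemma floor_add_ceiling_pos:
  assumes "t > 0"
  shows "floor_add_ceiling t \<ge> 1"
proof -
  have "\<lfloor>t\<rfloor> \<ge> 0" and "\<lceil>t\<rceil> > 0" using assms by simp_all
  then show ?thesis unfolding floor_add_ceiling_def by linarith
qed

lemma floor_add_ceiling_le_three_halves:
  assumes "x \<ge> 0"
  shows "floor_add_ceiling x \<le> 3 * floor_add_ceiling (x / 2)"
proof -
  define n where "n = \<lfloor>x / 2\<rfloor>"
  have "n \<ge> 0" using assms by (simp add: n_def)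
  show ?thesis
  proof (cases "x / 2 = of_int n")
    case True
    then have "floor_add_ceiling (x / 2) = 2 * n"
      by (simp add: floor_add_ceiling_def ceiling_altdef n_def)
    moreover have "x = of_int (2 * n)" using True by simp
    then have "floor_add_ceiling x = 4 * n"
      unfolding floor_add_ceiling_def by (simp only: floor_of_int ceiling_of_int)
    ultimately show ?thesis using \<open>n \<ge> 0\<close> by linarith
  next
    case False
    then have "floor_add_ceiling (x / 2) = 2 * n + 1"
      by (simp add: floor_add_ceiling_def ceiling_altdef n_def)
    moreover have "x < 2 * n + 2" using n_def by linarith
    then have "\<lfloor>x\<rfloor> \<le> 2 * n + 1" and "\<lceil>x\<rceil> \<le> 2 * n + 2"
      by (simp_all add: floor_le_iff ceiling_le_iff)
    then have "floor_add_ceiling x \<le> 4 * n + 3"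
      unfolding floor_add_ceiling_def by linarith
    ultimately show ?thesis using \<open>n \<ge> 0\<close> by linarith
  qed
qed

lemma f_a_lower_bound:
  assumes "(\<Sum>k\<leftarrow>a. 1 / real k) \<ge> 1" and "x \<ge> 0"
  shows "f_a a x \<ge> - int (length a) - 1"
proof -
  have "2 * x * (\<Sum>k\<leftarrow>a. 1 / real k) - real (length a)
          \<le> (\<Sum>k\<leftarrow>a. floor_add_ceiling (x / real k))"
  proof (induction a)
    case (Cons k a)
    then show ?case using floor_add_ceiling_ge[of "x / real k"] by (simp add: algebra_simps)
  qed simp
  moreover have "2 * x \<le> 2 * x * (\<Sum>k\<leftarrow>a. 1 / real k)"
    using mult_left_mono[OF assms(1), of "2 * x"] assms(2) by simp
  ultimately show ?thesis
    using floor_add_ceiling_le[of x] unfolding f_a_eq by linarith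
qed

lemma f_a_attains_min:
  assumes "(\<Sum>k\<leftarrow>a. 1 / real k) \<ge> 1"
  shows "\<exists>x>0. \<forall>y>0. f_a a x \<le> f_a a y"
proof -
  let ?V = "f_a a ` {0<..}"
  have "?V \<noteq> {}" by auto
  moreover have "bdd_below ?V"
    using f_a_lower_bound[OF assms] by (intro bdd_belowI2[where m = "- int (length a) - 1"]) auto
  ultimately have "Inf ?V \<in> ?V" and "\<forall>v\<in>?V. Inf ?V \<le> v"
    by (auto intro: Inf_int_mem cInf_lower)
  then show ?thesis by auto
qed

lemma m_a_ge:
  assumes "(\<Sum>k\<leftarrow>a. 1 / real k) \<ge> 1" and "\<And>x. x > 0 \<Longrightarrow> c \<le> f_a a x"
  shows "c \<le> m_a a"
proof -
  obtain x where "x > 0" and "\<forall>y>0. f_a a x \<le> f_a a y"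
    using f_a_attains_min[OF assms(1)] by blast
  then have "m_a a = f_a a x"
    unfolding m_a_def by (intro Least_equality) auto
  then show ?thesis using assms(2)[OF \<open>x > 0\<close>] by simp
qed

lemma f_a_222_ge_length:
  assumes "\<forall>k\<in>set b. k > 0" and "x > 0"
  shows "f_a ([2,2,2] @ b) x \<ge> int (length b)"
proof -
  have "(\<Sum>k\<leftarrow>b. 1) \<le> (\<Sum>k\<leftarrow>b. floor_add_ceiling (x / real k))"
    using assms by (intro sum_list_mono floor_add_ceiling_pos) auto
  then show ?thesis
    using floor_add_ceiling_le_three_halves[of x] assms(2)
    by (simp add: f_a_eq sum_list_triv)
qed

theorem lemma5p6:
  fixes a :: "nat list"
  assumes "a \<noteq> []"
    and "\<forall>k\<in>set a. k > 0"
    and "(\<Sum>k\<leftarrow>a. 1 / real k) \<ge> 1"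
  shows "(\<exists>x>0. \<forall>y>0. f_a a x \<le> f_a a y)
       \<and> (\<forall>b :: nat list. length b \<ge> 2 \<and> (\<forall>k\<in>set b. k > 0)
             \<longrightarrow> m_a ([2,2,2] @ b) \<ge> 2)"
proof (intro conjI allI impI)
  show "\<exists>x>0. \<forall>y>0. f_a a x \<le> f_a a y"
    using assms(3) by (rule f_a_attains_min)
next
  fix b :: "nat list"
  assume b: "length b \<ge> 2 \<and> (\<forall>k\<in>set b. k > 0)"
  have "(\<Sum>k\<leftarrow>b. 1 / real k) \<ge> 0"
    by (intro sum_list_nonneg) auto
  then have "(\<Sum>k\<leftarrow>[2,2,2] @ b. 1 / real k) \<ge> 1"
    by simp
  moreover have "2 \<le> f_a ([2,2,2] @ b) x" if "x > 0" for x
    using f_a_222_ge_length[of b x] b that by linarith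
  ultimately show "m_a ([2,2,2] @ b) \<ge> 2"
    by (rule m_a_ge)
qed

end
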